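(* In the three-door Monty Hall game described in the context, let $Q$ be an arbitrary mixed strategy of Monte, with $\pi_\theta=Q(\{(\theta,d):d\neq\theta\})$ for $\theta\in\{1,2,3\}$, and let $u$ be a door with $\pi_u=\min(\pi_1,\pi_2,\pi_3)$. Then the always-switching pure strategy $u\,\mathrm{s}\,\mathrm{s}$ is Bayesian for $Q$, and its winning probability against $Q$ equals $1-\min(\pi_1,\pi_2,\pi_3)$.
   Context: Doors are numbered $1,2,3$. A pure strategy of Monte is a pair $(\theta,d)$ with $\theta\in\{1,2,3\}$ (the door hiding the prize) and $d\in\{1,2,3\}\setminus\{\theta\}$ (six strategies). A pure strategy of Conie is a triple $x\,a\,b$ with $x\in\{1,2,3\}$ and $a,b\in\{\mathrm{h},\mathrm{s}\}$ (twelve strategies). Under the profile $((\theta,d),x\,a\,b)$: Monte offers door $y=\theta$ if $x\neq\theta$ and $y=d$ if $x=\theta$; Conie's action is $a$ if $y$ is the smaller of the two doors in $\{1,2,3\}\setminus\{x\}$ and $b$ otherwise; her final choice is $z=x$ for action $\mathrm{h}$ and $z=y$ for action $\mathrm{s}$; she wins (payoff 1) iff $z=\theta$, else payoff 0. A mixed strategy is a probability distribution on pure strategies. For a mixed strategy $Q$ of Monte, a strategy of Conie is Bayesian if it maximizes Conie's winning probability against $Q$ (strategies played independently) among all mixed strategies of Conie. *)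

theory Defs
  imports Main "HOL-Analysis.Analysis"
begin

datatype act = Hold | Switch

type_synonym monte = "nat \<times> nat"
type_synonym conie = "nat \<times> act \<times> act"

definition doors :: "nat set" where "doors = {1,2,3}"

definition MonteS :: "monte set" where
  "MonteS = {(\<theta>, d). \<theta> \<in> doors \<and> d \<in> doors \<and> d \<noteq> \<theta>}"

definition ConieS :: "conie set" where
  "ConieS = {(x, a, b). x \<in> doors}"

definition offer :: "monte \<Rightarrow> conie \<Rightarrow> nat" where
  "offer m c = (case m of (\<theta>, d) \<Rightarrow> case c of (x, a, b) \<Rightarrow> if x \<noteq> \<theta> then \<theta> else d)"

definition action :: "monte \<Rightarrow> conie \<Rightarrow> act" where
  "action m c = (case c of (x, a, b) \<Rightarrow>
     if offer m c = Min (doors - {x}) then a else b)"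

definition final :: "monte \<Rightarrow> conie \<Rightarrow> nat" where
  "final m c = (case c of (x, a, b) \<Rightarrow>
     (case action m c of Hold \<Rightarrow> x | Switch \<Rightarrow> offer m c))"

definition payoff :: "monte \<Rightarrow> conie \<Rightarrow> real" where
  "payoff m c = (if final m c = fst m then 1 else 0)"

definition mixed :: "'a set \<Rightarrow> ('a \<Rightarrow> real) \<Rightarrow> bool" where
  "mixed S p \<longleftrightarrow> (\<forall>s\<in>S. 0 \<le> p s) \<and> (\<Sum>s\<in>S. p s) = 1"

definition winprob :: "(monte \<Rightarrow> real) \<Rightarrow> (conie \<Rightarrow> real) \<Rightarrow> real" where
  "winprob Q P = (\<Sum>m\<in>MonteS. \<Sum>c\<in>ConieS. Q m * P c * payoff m c)"

definition point :: "conie \<Rightarrow> conie \<Rightarrow> real" where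
  "point c = (\<lambda>c'. if c' = c then 1 else 0)"

definition bayesian :: "(monte \<Rightarrow> real) \<Rightarrow> (conie \<Rightarrow> real) \<Rightarrow> bool" where
  "bayesian Q P \<longleftrightarrow> mixed ConieS P \<and>
     (\<forall>P'. mixed ConieS P' \<longrightarrow> winprob Q P' \<le> winprob Q P)"

definition prior :: "(monte \<Rightarrow> real) \<Rightarrow> nat \<Rightarrow> real" where
  "prior Q \<theta> = (\<Sum>m\<in>{m\<in>MonteS. fst m = \<theta>}. Q m)"

end

theory Submission
  imports Defs
begin

text \<open>Conie's winning probability is linear in her mixed strategy, so it is maximised by a pure
  strategy. Every pure strategy loses for sure when the prize is behind some door \<open>\<theta>\<close>: if she
  always switches, \<open>\<theta>\<close> is her first pick; otherwise \<open>\<theta>\<close> is a door that, when offered, makes her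
  hold. Hence no strategy wins with probability more than \<open>1 - \<pi>\<^sub>\<theta> \<le> 1 - min \<pi>\<close>, while always
  switching away from the least likely door \<open>u\<close> wins exactly when the prize is not behind \<open>u\<close>.\<close>

lemma mixed_point: "finite S \<Longrightarrow> s \<in> S \<Longrightarrow> mixed S (point s)"
  unfolding mixed_def point_def by simp

lemma mixed_weighted_sum_le:
  assumes "mixed S P" and "\<And>s. s \<in> S \<Longrightarrow> f s \<le> M"
  shows "(\<Sum>s\<in>S. P s * f s) \<le> M"
proof -
  have "(\<Sum>s\<in>S. P s * f s) \<le> (\<Sum>s\<in>S. P s * M)"
    using assms by (intro sum_mono mult_left_mono) (auto simp: mixed_def)
  also have "\<dots> = M"
    using assms(1) by (simp add: mixed_def flip: sum_distrib_right)
  finally show ?thesis .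
qed

definition pure_winprob :: "(monte \<Rightarrow> real) \<Rightarrow> conie \<Rightarrow> real" where
  "pure_winprob Q c = (\<Sum>m\<in>MonteS. Q m * payoff m c)"

lemma winprob_eq_sum_pure_winprob: "winprob Q P = (\<Sum>c\<in>ConieS. P c * pure_winprob Q c)"
  unfolding winprob_def pure_winprob_def
  by (subst sum.swap) (simp add: sum_distrib_left mult_ac)

lemma finite_MonteS: "finite MonteS"
  unfolding MonteS_def doors_def by (auto intro: finite_subset[of _ "{1,2,3} \<times> {1,2,3}"])

lemma finite_ConieS: "finite ConieS"
proof -
  have "(UNIV :: act set) = {Hold, Switch}"
    using act.exhaust by auto
  then have "ConieS = doors \<times> {Hold, Switch} \<times> {Hold, Switch}"
    unfolding ConieS_def by auto
  also have "finite \<dots>"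
    unfolding doors_def by simp
  finally show ?thesis .
qed

lemma winprob_point: "c \<in> ConieS \<Longrightarrow> winprob Q (point c) = pure_winprob Q c"
  unfolding winprob_eq_sum_pure_winprob point_def using finite_ConieS
  by (simp add: if_distrib[of "\<lambda>p. p * _"] cong: if_cong)

lemma bayesian_point_if_best_pure:
  assumes "c \<in> ConieS" and "\<And>c'. c' \<in> ConieS \<Longrightarrow> pure_winprob Q c' \<le> pure_winprob Q c"
  shows "bayesian Q (point c)"
proof -
  have "winprob Q P \<le> winprob Q (point c)" if "mixed ConieS P" for P
    unfolding winprob_point[OF assms(1)] winprob_eq_sum_pure_winprob[of Q P]
    using that assms(2) by (rule mixed_weighted_sum_le)
  then show ?thesis
    unfolding bayesian_def using mixed_point[OF finite_ConieS assms(1)] by blast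
qed

lemma payoff_always_switch:
  "m \<in> MonteS \<Longrightarrow> payoff m (x, Switch, Switch) = (if fst m = x then 0 else 1)"
  unfolding MonteS_def payoff_def final_def action_def offer_def by (auto split: if_splits)

lemma exists_door_ne_Min: "x \<in> doors \<Longrightarrow> \<exists>y\<in>doors - {x}. y \<noteq> Min (doors - {x})"
  unfolding doors_def by (auto simp: insert_Diff_if)

lemma exists_losing_door:
  assumes "c \<in> ConieS"
  shows "\<exists>\<theta>\<in>doors. \<forall>m\<in>MonteS. fst m = \<theta> \<longrightarrow> payoff m c = 0"
proof -
  obtain x a b where c: "c = (x, a, b)" and x: "x \<in> doors"
    using assms unfolding ConieS_def by auto
  \<comment> \<open>With the prize behind an unpicked door \<open>\<theta>\<close>, Monte must offer \<open>\<theta>\<close>.\<close>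
  have hold_loses: "\<forall>m\<in>MonteS. fst m = \<theta> \<longrightarrow> payoff m c = 0"
    if "\<theta> \<in> doors - {x}" and "(if \<theta> = Min (doors - {x}) then a else b) = Hold" for \<theta>
    using that unfolding c payoff_def final_def action_def offer_def by auto
  consider "a = Switch" "b = Switch" | "a = Hold" | "b = Hold"
    by (meson act.exhaust)
  then show ?thesis
  proof cases
    case 1
    then show ?thesis
      using x payoff_always_switch unfolding c by auto
  next
    case 2
    have min_door: "Min (doors - {x}) \<in> doors - {x}"
      using x unfolding doors_def by (intro Min_in) auto
    with 2 have "\<forall>m\<in>MonteS. fst m = Min (doors - {x}) \<longrightarrow> payoff m c = 0"
      by (intro hold_loses) auto
    with min_door show ?thesis
      by blast
  next
    case 3
    then show ?thesis
      using hold_loses exists_door_ne_Min[OF x] by fastforce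
  qed
qed

lemma prior_eq_sum_if: "prior Q \<theta> = (\<Sum>m\<in>MonteS. if fst m = \<theta> then Q m else 0)"
  unfolding prior_def using finite_MonteS by (simp add: sum.inter_filter)

lemma pure_winprob_le_if_losing_door:
  assumes Q: "mixed MonteS Q" and lose: "\<forall>m\<in>MonteS. fst m = \<theta> \<longrightarrow> payoff m c = 0"
  shows "pure_winprob Q c \<le> 1 - prior Q \<theta>"
proof -
  have "pure_winprob Q c = (\<Sum>m\<in>MonteS. if fst m = \<theta> then 0 else Q m * payoff m c)"
    unfolding pure_winprob_def using lose by (intro sum.cong) auto
  also have "\<dots> \<le> (\<Sum>m\<in>MonteS. if fst m = \<theta> then 0 else Q m)"
    using Q by (intro sum_mono) (auto simp: mixed_def payoff_def)
  also have "\<dots> = (\<Sum>m\<in>MonteS. Q m) - prior Q \<theta>"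
    unfolding prior_eq_sum_if sum_subtractf[symmetric] by (intro sum.cong) auto
  finally show ?thesis
    using Q by (simp add: mixed_def)
qed

lemma pure_winprob_le_1_minus_min_prior:
  assumes "mixed MonteS Q" and "c \<in> ConieS"
  shows "pure_winprob Q c \<le> 1 - Min {prior Q 1, prior Q 2, prior Q 3}"
proof -
  obtain \<theta> where "\<theta> \<in> doors" and "\<forall>m\<in>MonteS. fst m = \<theta> \<longrightarrow> payoff m c = 0"
    using exists_losing_door[OF assms(2)] by blast
  moreover have "Min {prior Q 1, prior Q 2, prior Q 3} \<le> prior Q \<theta>" if "\<theta> \<in> doors"
    using that unfolding doors_def by auto
  ultimately show ?thesis
    using pure_winprob_le_if_losing_door[OF assms(1)] by fastforce
qed

lemma pure_winprob_always_switch: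
  assumes "mixed MonteS Q"
  shows "pure_winprob Q (x, Switch, Switch) = 1 - prior Q x"
proof -
  have "pure_winprob Q (x, Switch, Switch) = (\<Sum>m\<in>MonteS. Q m - (if fst m = x then Q m else 0))"
    unfolding pure_winprob_def by (intro sum.cong) (auto simp: payoff_always_switch)
  then show ?thesis
    using assms by (simp add: sum_subtractf mixed_def flip: prior_eq_sum_if)
qed

theorem mainTheorem5:
  fixes Q :: "monte \<Rightarrow> real" and u :: nat
  assumes "mixed MonteS Q"
    and "u \<in> doors"
    and "prior Q u = Min {prior Q 1, prior Q 2, prior Q 3}"
  shows "bayesian Q (point (u, Switch, Switch)) \<and>
         winprob Q (point (u, Switch, Switch)) = 1 - Min {prior Q 1, prior Q 2, prior Q 3}"
proof -
  have u: "(u, Switch, Switch) \<in> ConieS"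
    using assms(2) unfolding ConieS_def by simp
  have switch_value: "pure_winprob Q (u, Switch, Switch) = 1 - Min {prior Q 1, prior Q 2, prior Q 3}"
    using pure_winprob_always_switch[OF assms(1)] assms(3) by simp
  have "bayesian Q (point (u, Switch, Switch))"
    using bayesian_point_if_best_pure[OF u] pure_winprob_le_1_minus_min_prior[OF assms(1)]
    by (simp add: switch_value)
  then show ?thesis
    using winprob_point[OF u] switch_value by simp
qed

end
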